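(* Let $(W,\omega^W)$ be a vertex operator algebra and $\omega^1,\omega^2\in\operatorname{Sc}(W,\omega^W)$. If there exists a semi-conformal subalgebra $(U,\omega^2)$ of $(W,\omega^W)$ with $\omega^1\in U$, then $C_W(C_W(\langle\omega^1\rangle))\subseteq C_W(C_W(\langle\omega^2\rangle))$.
   Context: A semi-conformal subalgebra $(U,\omega')$ of a vertex operator algebra $(W,\omega^W)$ is a vertex subalgebra $U$ with a vector $\omega'\in U$ making it a vertex operator algebra such that $\omega^W_n|_U=\omega'_n|_U$ for all $n\ge 0$; $\omega'$ is then a semi-conformal vector, and $\operatorname{Sc}(W,\omega^W)$ is the set of these. $C_W(U)=\{v\in W: u_nv=0\ \forall u\in U,\ n\ge0\}$ is the commutant, and $\langle\omega'\rangle$ is the vertex subalgebra generated by $\omega'$ and $\mathbf 1$. *)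

theory Defs
  imports Complex_Main "HOL-Library.Groups_Big_Fun"
begin

text \<open>The vertex operator of a vertex algebra is encoded by its modes: Y u n v stands for u_n v,
i.e. Y(u,z) v = sum over n of (u_n v) z^(-n-1).\<close>

definition vertex_algebra ::
  "(complex \<Rightarrow> 'v::ab_group_add \<Rightarrow> 'v) \<Rightarrow> 'v set \<Rightarrow> ('v \<Rightarrow> int \<Rightarrow> 'v \<Rightarrow> 'v) \<Rightarrow> 'v \<Rightarrow> bool" where
  "vertex_algebra sc V Y vac \<longleftrightarrow>
     vector_space sc \<and> module.subspace sc V \<and> vac \<in> V \<and>
     (\<forall>u\<in>V. \<forall>v\<in>V. \<forall>n. Y u n v \<in> V) \<and>
     (\<forall>u\<in>V. \<forall>u'\<in>V. \<forall>w\<in>V. \<forall>n a. Y (u + u') n w = Y u n w + Y u' n w \<and> Y (sc a u) n w = sc a (Y u n w)) \<and>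
     (\<forall>u\<in>V. \<forall>w\<in>V. \<forall>w'\<in>V. \<forall>n a. Y u n (w + w') = Y u n w + Y u n w' \<and> Y u n (sc a w) = sc a (Y u n w)) \<and>
     (\<forall>u\<in>V. \<forall>v\<in>V. \<exists>N. \<forall>n\<ge>N. Y u n v = 0) \<and>
     (\<forall>v\<in>V. \<forall>n. Y vac n v = (if n = -1 then v else 0)) \<and>
     (\<forall>v\<in>V. Y v (-1) vac = v \<and> (\<forall>n\<ge>0. Y v n vac = 0)) \<and>
     (\<forall>u\<in>V. \<forall>v\<in>V. \<forall>w\<in>V. \<forall>p q r.
        Sum_any (\<lambda>i::nat. sc (of_int p gchoose i) (Y (Y u (r + int i) v) (p + q - int i) w)) =
        Sum_any (\<lambda>i::nat. sc ((-1) ^ i * (of_int r gchoose i))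
            (Y u (p + r - int i) (Y v (q + int i) w)
             - sc (if even r then 1 else -1) (Y v (q + r - int i) (Y u (p + int i) w)))))"

definition Lop :: "('v \<Rightarrow> int \<Rightarrow> 'v \<Rightarrow> 'v) \<Rightarrow> 'v \<Rightarrow> int \<Rightarrow> 'v \<Rightarrow> 'v" where
  "Lop Y om n = Y om (n + 1)"

definition wt_space ::
  "(complex \<Rightarrow> 'v \<Rightarrow> 'v) \<Rightarrow> 'v set \<Rightarrow> ('v \<Rightarrow> int \<Rightarrow> 'v \<Rightarrow> 'v) \<Rightarrow> 'v \<Rightarrow> int \<Rightarrow> 'v set" where
  "wt_space sc V Y om n = {v \<in> V. Lop Y om 0 v = sc (of_int n) v}"

definition voa ::
  "(complex \<Rightarrow> 'v::ab_group_add \<Rightarrow> 'v) \<Rightarrow> 'v set \<Rightarrow> ('v \<Rightarrow> int \<Rightarrow> 'v \<Rightarrow> 'v) \<Rightarrow> 'v \<Rightarrow> 'v \<Rightarrow> bool" where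
  "voa sc V Y vac om \<longleftrightarrow>
     vertex_algebra sc V Y vac \<and> om \<in> V \<and>
     (\<exists>c::complex. \<forall>v\<in>V. \<forall>m n.
        Lop Y om m (Lop Y om n v) - Lop Y om n (Lop Y om m v) =
        sc (of_int (m - n)) (Lop Y om (m + n) v)
        + (if m + n = 0 then sc ((of_int m ^ 3 - of_int m) / 12 * c) v else 0)) \<and>
     (\<forall>u\<in>V. \<forall>w\<in>V. \<forall>n. Y (Lop Y om (-1) u) n w = sc (- of_int n) (Y u (n - 1) w)) \<and>
     V \<subseteq> module.span sc (\<Union>n. wt_space sc V Y om n) \<and>
     (\<forall>n. \<exists>B. finite B \<and> wt_space sc V Y om n \<subseteq> module.span sc B) \<and>
     (\<exists>N. \<forall>n<N. wt_space sc V Y om n = {0}) \<and>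
     om \<in> wt_space sc V Y om 2"

definition vertex_subalgebra ::
  "(complex \<Rightarrow> 'v::ab_group_add \<Rightarrow> 'v) \<Rightarrow> 'v set \<Rightarrow> ('v \<Rightarrow> int \<Rightarrow> 'v \<Rightarrow> 'v) \<Rightarrow> 'v \<Rightarrow> 'v set \<Rightarrow> bool" where
  "vertex_subalgebra sc W Y vac U \<longleftrightarrow>
     module.subspace sc U \<and> U \<subseteq> W \<and> vac \<in> U \<and> (\<forall>u\<in>U. \<forall>v\<in>U. \<forall>n. Y u n v \<in> U)"

definition semiconf_subalg ::
  "(complex \<Rightarrow> 'v::ab_group_add \<Rightarrow> 'v) \<Rightarrow> 'v set \<Rightarrow> ('v \<Rightarrow> int \<Rightarrow> 'v \<Rightarrow> 'v) \<Rightarrow> 'v \<Rightarrow> 'v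
     \<Rightarrow> 'v set \<Rightarrow> 'v \<Rightarrow> bool" where
  "semiconf_subalg sc W Y vac omW U om' \<longleftrightarrow>
     vertex_subalgebra sc W Y vac U \<and> om' \<in> U \<and> voa sc U Y vac om' \<and>
     (\<forall>n\<ge>0. \<forall>u\<in>U. Y omW n u = Y om' n u)"

definition Sc ::
  "(complex \<Rightarrow> 'v::ab_group_add \<Rightarrow> 'v) \<Rightarrow> 'v set \<Rightarrow> ('v \<Rightarrow> int \<Rightarrow> 'v \<Rightarrow> 'v) \<Rightarrow> 'v \<Rightarrow> 'v \<Rightarrow> 'v set" where
  "Sc sc W Y vac omW = {om'. \<exists>U. semiconf_subalg sc W Y vac omW U om'}"

definition commutant :: "'v::zero set \<Rightarrow> ('v \<Rightarrow> int \<Rightarrow> 'v \<Rightarrow> 'v) \<Rightarrow> 'v set \<Rightarrow> 'v set" where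
  "commutant W Y U = {v \<in> W. \<forall>u\<in>U. \<forall>n\<ge>0. Y u n v = 0}"

inductive_set gen_subalg ::
  "(complex \<Rightarrow> 'v::ab_group_add \<Rightarrow> 'v) \<Rightarrow> ('v \<Rightarrow> int \<Rightarrow> 'v \<Rightarrow> 'v) \<Rightarrow> 'v \<Rightarrow> 'v set \<Rightarrow> 'v set"
  for sc Y vac S where
  gen_base: "x \<in> S \<Longrightarrow> x \<in> gen_subalg sc Y vac S"
| gen_vac: "vac \<in> gen_subalg sc Y vac S"
| gen_zero: "0 \<in> gen_subalg sc Y vac S"
| gen_add: "x \<in> gen_subalg sc Y vac S \<Longrightarrow> y \<in> gen_subalg sc Y vac S \<Longrightarrow> x + y \<in> gen_subalg sc Y vac S"
| gen_scale: "x \<in> gen_subalg sc Y vac S \<Longrightarrow> sc a x \<in> gen_subalg sc Y vac S"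
| gen_prod: "x \<in> gen_subalg sc Y vac S \<Longrightarrow> y \<in> gen_subalg sc Y vac S \<Longrightarrow> Y x n y \<in> gen_subalg sc Y vac S"

end

theory Submission
  imports Defs
begin

text \<open>Write \<open>a\<^sub>n\<close> for the \<open>n\<close>-th mode of \<open>a\<close>, and let \<open>v \<in> W\<close> be annihilated by
  \<open>\<omega>\<^sup>2\<^sub>0\<close>. For \<open>u \<in> U\<close>, the commutator formula \<open>[\<omega>\<^sup>2\<^sub>0, u\<^sub>q] = (\<omega>\<^sup>2\<^sub>0 u)\<^sub>q\<close>, the
  semi-conformal identity \<open>\<omega>\<^sup>2\<^sub>0 u = \<omega>\<^sup>W\<^sub>0 u = L(-1) u\<close> and the derivative property of
  \<open>L(-1)\<close> give \<open>\<omega>\<^sup>2\<^sub>0 (u\<^sub>q v) = -q u\<^bsub>q-1\<^esub> v\<close>. Hence vanishing of \<open>u\<^sub>q v\<close> for some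
  \<open>q \<ge> 1\<close> propagates to \<open>u\<^bsub>q-1\<^esub> v\<close>, and descending from the truncation bound shows
  \<open>u\<^sub>n v = 0\<close> for all \<open>n \<ge> 0\<close>. Thus \<open>C\<^sub>W(\<langle>\<omega>\<^sup>2\<rangle>) \<subseteq> C\<^sub>W(U) \<subseteq> C\<^sub>W(\<langle>\<omega>\<^sup>1\<rangle>)\<close>, and
  taking commutants reverses this inclusion.\<close>

lemma Sum_any_eq_single:
  assumes "\<And>i. i \<noteq> a \<Longrightarrow> f i = (0::'a::comm_monoid_add)"
  shows "Sum_any f = f a"
proof -
  have "f = (\<lambda>i. if i = a then f i else 0)" using assms by auto
  then show ?thesis by (metis Sum_any.delta)
qed

lemma zero_downward_from_bound:
  fixes f :: "int \<Rightarrow> 'a::zero"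
  assumes bound: "\<And>n. n \<ge> N \<Longrightarrow> f n = 0"
    and step: "\<And>q. q \<ge> 1 \<Longrightarrow> f q = 0 \<Longrightarrow> f (q - 1) = 0"
    and "n \<ge> 0"
  shows "f n = 0"
  using \<open>n \<ge> 0\<close>
proof (induction "nat (N - n)" arbitrary: n)
  case 0
  then show ?case using bound by simp
next
  case (Suc k)
  then have "f (n + 1) = 0" by (cases "n + 1 \<ge> N") (auto intro: bound)
  then show ?case using step[of "n + 1"] Suc.prems by simp
qed

lemma commutant_antimono: "A \<subseteq> B \<Longrightarrow> commutant W Y B \<subseteq> commutant W Y A"
  unfolding commutant_def by auto

lemma gen_subalg_minimal:
  assumes "module sc" "vertex_subalgebra sc W Y vac U" "S \<subseteq> U"
  shows "gen_subalg sc Y vac S \<subseteq> U"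
proof
  fix x assume "x \<in> gen_subalg sc Y vac S"
  then show "x \<in> U"
    by induction
      (use assms in \<open>auto simp: vertex_subalgebra_def module.subspace_def[OF \<open>module sc\<close>]\<close>)
qed

lemma vertex_algebra_vector_space:
  "vertex_algebra sc V Y vac \<Longrightarrow> vector_space sc"
  unfolding vertex_algebra_def by simp

lemma vertex_algebra_mode_zero_right:
  assumes "vertex_algebra sc V Y vac" "u \<in> V"
  shows "Y u n 0 = 0"
proof -
  interpret vector_space sc using assms(1) by (rule vertex_algebra_vector_space)
  have "0 \<in> V" using assms(1) unfolding vertex_algebra_def subspace_def by simp
  then have "Y u n (sc 0 0) = sc 0 (Y u n 0)"
    using assms unfolding vertex_algebra_def by blast
  then show ?thesis by simp
qed

text \<open>The Borcherds identity with \<open>p = r = 0\<close>.\<close>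

lemma vertex_algebra_zero_mode_commutator:
  assumes va: "vertex_algebra sc V Y vac" and "a \<in> V" "b \<in> V" "w \<in> V"
  shows "Y (Y a 0 b) q w = Y a 0 (Y b q w) - Y b q (Y a 0 w)"
proof -
  interpret vector_space sc using va by (rule vertex_algebra_vector_space)
  have "Sum_any (\<lambda>i::nat. sc (of_int 0 gchoose i) (Y (Y a (0 + int i) b) (0 + q - int i) w)) =
        Sum_any (\<lambda>i::nat. sc ((-1) ^ i * (of_int 0 gchoose i))
          (Y a (0 + 0 - int i) (Y b (q + int i) w)
           - sc (if even (0::int) then 1 else -1) (Y b (q + 0 - int i) (Y a (0 + int i) w))))"
    using assms unfolding vertex_algebra_def by blast
  then show ?thesis
    by (subst (asm) (1 2) Sum_any_eq_single[where a = 0]) (auto simp: gbinomial_0_left)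
qed

lemma voa_L_minus_one_derivative:
  assumes "voa sc W Y vac omW" "u \<in> W" "w \<in> W"
  shows "Y (Y omW 0 u) n w = sc (- of_int n) (Y u (n - 1) w)"
  using assms unfolding voa_def Lop_def by simp

lemma semiconf_zero_mode_lowers:
  assumes voa: "voa sc W Y vac omW" and sc: "semiconf_subalg sc W Y vac omW U om'"
    and "u \<in> U" "v \<in> W" "Y om' 0 v = 0"
  shows "Y om' 0 (Y u q v) = sc (- of_int q) (Y u (q - 1) v)"
proof -
  have va: "vertex_algebra sc W Y vac" using voa unfolding voa_def by simp
  have "U \<subseteq> W" "om' \<in> U" and conformal: "\<And>n u. n \<ge> 0 \<Longrightarrow> u \<in> U \<Longrightarrow> Y omW n u = Y om' n u"
    using sc unfolding semiconf_subalg_def vertex_subalgebra_def by auto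
  with assms have "u \<in> W" "om' \<in> W" by auto
  have "Y om' 0 (Y u q v) = Y (Y om' 0 u) q v"
    using vertex_algebra_zero_mode_commutator[OF va \<open>om' \<in> W\<close> \<open>u \<in> W\<close> \<open>v \<in> W\<close>]
      vertex_algebra_mode_zero_right[OF va \<open>u \<in> W\<close>] assms(5) by simp
  also have "\<dots> = Y (Y omW 0 u) q v" using conformal \<open>u \<in> U\<close> by simp
  also have "\<dots> = sc (- of_int q) (Y u (q - 1) v)"
    using voa_L_minus_one_derivative[OF voa \<open>u \<in> W\<close> \<open>v \<in> W\<close>] .
  finally show ?thesis .
qed

lemma semiconf_zero_mode_kernel_subset_commutant:
  assumes voa: "voa sc W Y vac omW" and sc: "semiconf_subalg sc W Y vac omW U om'"
  shows "{v \<in> W. Y om' 0 v = 0} \<subseteq> commutant W Y U"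
proof (clarsimp simp: commutant_def)
  fix v u and n :: int
  assume v: "v \<in> W" "Y om' 0 v = 0" and "u \<in> U" "n \<ge> 0"
  have va: "vertex_algebra sc W Y vac" using voa unfolding voa_def by simp
  interpret vector_space sc using va by (rule vertex_algebra_vector_space)
  have "U \<subseteq> W" "om' \<in> U" using sc unfolding semiconf_subalg_def vertex_subalgebra_def by auto
  with \<open>u \<in> U\<close> have "u \<in> W" "om' \<in> W" by auto
  have "\<exists>N. \<forall>n\<ge>N. Y u n v = 0" using va \<open>u \<in> W\<close> \<open>v \<in> W\<close> unfolding vertex_algebra_def by simp
  then obtain N where bound: "\<forall>n\<ge>N. Y u n v = 0" ..
  show "Y u n v = 0"
  proof (rule zero_downward_from_bound[where f = "\<lambda>n. Y u n v" and N = N])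
    fix q :: int assume "q \<ge> 1" "Y u q v = 0"
    then have "sc (- of_int q) (Y u (q - 1) v) = 0"
      using semiconf_zero_mode_lowers[OF voa sc \<open>u \<in> U\<close> v]
        vertex_algebra_mode_zero_right[OF va \<open>om' \<in> W\<close>] by metis
    with \<open>q \<ge> 1\<close> show "Y u (q - 1) v = 0" by simp
  qed (use bound \<open>n \<ge> 0\<close> in auto)
qed

theorem lemma2p5:
  fixes sc :: "complex \<Rightarrow> 'v::ab_group_add \<Rightarrow> 'v"
    and W U :: "'v set" and Y :: "'v \<Rightarrow> int \<Rightarrow> 'v \<Rightarrow> 'v"
    and vac omW om1 om2 :: 'v
  assumes "voa sc W Y vac omW"
    and "om1 \<in> Sc sc W Y vac omW"
    and "om2 \<in> Sc sc W Y vac omW"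
    and "semiconf_subalg sc W Y vac omW U om2"
    and "om1 \<in> U"
  shows "commutant W Y (commutant W Y (gen_subalg sc Y vac {om1}))
         \<subseteq> commutant W Y (commutant W Y (gen_subalg sc Y vac {om2}))"
proof -
  have "module sc"
    using assms(1) unfolding voa_def vertex_algebra_def
    by (simp add: vector_space_def module_def)
  moreover have "vertex_subalgebra sc W Y vac U"
    using assms(4) unfolding semiconf_subalg_def by simp
  ultimately have "gen_subalg sc Y vac {om1} \<subseteq> U"
    using gen_subalg_minimal assms(5) by blast
  have "commutant W Y (gen_subalg sc Y vac {om2}) \<subseteq> {v \<in> W. Y om2 0 v = 0}"
    unfolding commutant_def by (auto intro: gen_base)
  also have "\<dots> \<subseteq> commutant W Y U"
    by (rule semiconf_zero_mode_kernel_subset_commutant[OF assms(1,4)])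
  also have "\<dots> \<subseteq> commutant W Y (gen_subalg sc Y vac {om1})"
    by (rule commutant_antimono) fact
  finally show ?thesis by (rule commutant_antimono)
qed

end
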